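(* In the standing setting, let $(A,B,R,\sigma)$ be a normalized context. If $\{(A_\lambda,B_\lambda,R_{A_\lambda\times B_\lambda},\sigma_{A_\lambda\times B_\lambda})\}_{\lambda\in\Lambda}$ is a decomposition of $(A,B,R,\sigma)$ into independent subcontexts, then $(\chi_{B_\lambda},\chi_{A_\lambda})\in\mathcal F_N$ for every $\lambda\in\Lambda$.
   Context: Adjoint triple: for posets $(P_1,\le_1),(P_2,\le_2),(P_3,\le_3)$, maps $\&\colon P_1\times P_2\to P_3$, $\swarrow\colon P_3\times P_2\to P_1$, $\nwarrow\colon P_3\times P_1\to P_2$ with $x\le_1 z\swarrow y \iff x\,\&\,y\le_3 z \iff y\le_2 z\nwarrow x$ for all $x,y,z$. For lower-bounded posets, $\&$ has zero-divisors if there are $x\ne\bot_1$, $y\neq\bot_2$ with $x\,\&\,y=\bot_3$. Standing setting: $(L_1,\preceq_1,\bot_1,\top_1)$ and $(L_2,\preceq_2,\bot_2,\top_2)$ are complete lattices and $(P,\le,\bot,\top)$ is a bounded poset. A multi-adjoint frame consists of adjoint triples $(\&_i,\swarrow^i,\nwarrow_i)$, $i=1,\dots,n$, with respect to $L_1,L_2,P$; a property-oriented frame consists of adjoint triples $(\&^p_j,\swarrow_p^j,\nwarrow^p_j)$, $j=1,\dots,m$, with respect to $P,L_2,L_1$; an object-oriented frame consists of adjoint triples $(\&^o_k,\swarrow_o^k,\nwarrow^o_k)$, $k=1,\dots,s$, with respect to $L_1,P,L_2$. All conjunctors $\&_i,\&^p_j,\&^o_k$ have no zero-divisors. A context $(A,B,R,\sigma)$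 consists of non-empty sets $A,B$, $R\colon A\times B\to P$, and maps $\sigma,\sigma_p,\sigma_o$ from $A\times B$ to the index sets of the three frames. It is normalized if every $a\in A$ has $b_1,b_2\in B$ with $R(a,b_1)\ne\bot$, $R(a,b_2)=\bot$, and every $b\in B$ has $a_1,a_2\in A$ with $R(a_1,b)\neq\bot$, $R(a_2,b)=\bot$. Fuzzy necessity operators: $g^{\uparrow_N}(a)=\inf\{g(b)\swarrow_o^{\sigma_o(a,b)}R(a,b)\mid b\in B\}$ for $g\in L_2^B$, and $f^{\downarrow^N}(b)=\inf\{f(a)\nwarrow^p_{\sigma_p(a,b)}R(a,b)\mid a\in A\}$ for $f\in L_1^A$. $\mathcal F_N=\{(g,f)\mid g\in L_2^B,\ f\in L_1^A,\ g^{\uparrow_N}=f,\ f^{\downarrow^N}=g\}$. For $X\subseteq B$, $\chi_X\in L_2^B$ takes value $\top_2$ on $X$ and $\bot_2$ elsewhere; for $Y\subseteq A$, $\chi_Y\in L_1^A$ takes value $\top_1$ on $Y$ and $\bot_1$ elsewhere. A separable subcontext of $(A,B,R,\sigma)$ is a tuple $(Y,X,R_{Y\times X},\sigma_{Y\times X})$ (restrictions of $R,\sigma$) with $Y\subseteq A$, $X\subseteq B$ non-empty, some $(a,b)\in Y\times X$ with $R(a,b)\ne\bot$, $R(a,b')=\bot$ for all $(a,b')\in Y\times(B\setminus X)$, and $R(a',b)=\bot$ for all $(a',b)\in(A\setminus Y)\times X$. A normalized context has a decomposition into independent subcontexts $\{(A_\lambda,B_\lambda,R_{A_\lambda\times B_\lambda},\sigma_{A_\lambda\times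 B_\lambda})\}_{\lambda\in\Lambda}$ ($\Lambda\ne\varnothing$) if each is a separable subcontext, $\{A_\lambda\}$ are pairwise disjoint with union $A$, $\{B_\lambda\}$ are pairwise disjoint with union $B$, and $\sigma$ assigns conjunctors without zero-divisors on $(A\setminus A_\lambda)\times B_\lambda$ and $A_\lambda\times(B\setminus B_\lambda)$ for all $\lambda$. *)

theory Defs
  imports Main
begin

definition adjoint_triple ::
  "('a::order \<Rightarrow> 'b::order \<Rightarrow> 'c::order) \<Rightarrow> ('c \<Rightarrow> 'b \<Rightarrow> 'a) \<Rightarrow> ('c \<Rightarrow> 'a \<Rightarrow> 'b) \<Rightarrow> bool" where
  "adjoint_triple cnj sw nw \<longleftrightarrow>
     (\<forall>x y z. (x \<le> sw z y \<longleftrightarrow> cnj x y \<le> z) \<and> (cnj x y \<le> z \<longleftrightarrow> y \<le> nw z x))"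

definition has_zero_divisors ::
  "('a::order_bot \<Rightarrow> 'b::order_bot \<Rightarrow> 'c::order_bot) \<Rightarrow> bool" where
  "has_zero_divisors cnj \<longleftrightarrow> (\<exists>x y. x \<noteq> bot \<and> y \<noteq> bot \<and> cnj x y = bot)"

definition normalized_context ::
  "'a set \<Rightarrow> 'b set \<Rightarrow> ('a \<Rightarrow> 'b \<Rightarrow> 'p::order_bot) \<Rightarrow> bool" where
  "normalized_context A B R \<longleftrightarrow>
     (\<forall>a\<in>A. \<exists>b1\<in>B. \<exists>b2\<in>B. R a b1 \<noteq> bot \<and> R a b2 = bot) \<and>
     (\<forall>b\<in>B. \<exists>a1\<in>A. \<exists>a2\<in>A. R a1 b \<noteq> bot \<and> R a2 b = bot)"

(* (Y, X, R restricted, sigma restricted) is a separable subcontext of (A,B,R,sigma) *)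
definition separable_subcontext ::
  "'a set \<Rightarrow> 'b set \<Rightarrow> ('a \<Rightarrow> 'b \<Rightarrow> 'p::order_bot) \<Rightarrow> 'a set \<Rightarrow> 'b set \<Rightarrow> bool" where
  "separable_subcontext A B R Y X \<longleftrightarrow>
     Y \<subseteq> A \<and> X \<subseteq> B \<and> Y \<noteq> {} \<and> X \<noteq> {} \<and>
     (\<exists>a\<in>Y. \<exists>b\<in>X. R a b \<noteq> bot) \<and>
     (\<forall>a\<in>Y. \<forall>b'\<in>B - X. R a b' = bot) \<and>
     (\<forall>a'\<in>A - Y. \<forall>b\<in>X. R a' b = bot)"

(* fuzzy necessity operators; the values of g (resp. f) outside B (resp. A) are irrelevant *)
definition up_N ::
  "'a set \<Rightarrow> 'b set \<Rightarrow> ('a \<Rightarrow> 'b \<Rightarrow> 'p) \<Rightarrow> ('k \<Rightarrow> 'l2 \<Rightarrow> 'p \<Rightarrow> 'l1::complete_lattice)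
   \<Rightarrow> ('a \<Rightarrow> 'b \<Rightarrow> 'k) \<Rightarrow> ('b \<Rightarrow> 'l2) \<Rightarrow> 'a \<Rightarrow> 'l1" where
  "up_N A B R swo sigma_o g a = Inf {swo (sigma_o a b) (g b) (R a b) | b. b \<in> B}"

definition down_N ::
  "'a set \<Rightarrow> 'b set \<Rightarrow> ('a \<Rightarrow> 'b \<Rightarrow> 'p) \<Rightarrow> ('j \<Rightarrow> 'l1 \<Rightarrow> 'p \<Rightarrow> 'l2::complete_lattice)
   \<Rightarrow> ('a \<Rightarrow> 'b \<Rightarrow> 'j) \<Rightarrow> ('a \<Rightarrow> 'l1) \<Rightarrow> 'b \<Rightarrow> 'l2" where
  "down_N A B R nwp sigma_p f b = Inf {nwp (sigma_p a b) (f a) (R a b) | a. a \<in> A}"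

definition in_F_N ::
  "'a set \<Rightarrow> 'b set \<Rightarrow> ('a \<Rightarrow> 'b \<Rightarrow> 'p)
   \<Rightarrow> ('j \<Rightarrow> 'l1::complete_lattice \<Rightarrow> 'p \<Rightarrow> 'l2::complete_lattice) \<Rightarrow> ('a \<Rightarrow> 'b \<Rightarrow> 'j)
   \<Rightarrow> ('k \<Rightarrow> 'l2 \<Rightarrow> 'p \<Rightarrow> 'l1) \<Rightarrow> ('a \<Rightarrow> 'b \<Rightarrow> 'k)
   \<Rightarrow> ('b \<Rightarrow> 'l2) \<Rightarrow> ('a \<Rightarrow> 'l1) \<Rightarrow> bool" where
  "in_F_N A B R nwp sigma_p swo sigma_o g f \<longleftrightarrow>
     (\<forall>a\<in>A. up_N A B R swo sigma_o g a = f a) \<and>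
     (\<forall>b\<in>B. down_N A B R nwp sigma_p f b = g b)"

definition chi :: "'x set \<Rightarrow> 'x \<Rightarrow> 'l::complete_lattice" where
  "chi X = (\<lambda>x. if x \<in> X then top else bot)"

end

theory Submission
  imports Defs
begin

(* Let (Y, X) be a separable block of a normalized context.  For a \<in> Y every term
   chi_X(b) \<swarrow> R(a,b) of the infimum defining (chi_X)^N(a) is top: either chi_X(b) = top,
   or b \<notin> X, whence R(a,b) = bot and bot \<swarrow> bot = top.  For a \<in> A - Y, normality gives
   some b with R(a,b) \<noteq> bot; separability forces b \<notin> X, and as the conjunctor has no
   zero-divisors, bot \<swarrow> R(a,b) = bot, so the infimum is bot.  The operator \<nwarrow> is the same
   construction on the transposed context, with the arguments of the conjunctor swapped. *)

lemma adjoint_triple_sw_top: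
  fixes c :: "'a::order_top \<Rightarrow> 'b::order \<Rightarrow> 'c::order_top"
  assumes "adjoint_triple c s n"
  shows "s top y = top"
  using assms unfolding adjoint_triple_def by (meson top.extremum top_le)

lemma adjoint_triple_sw_bot_bot:
  fixes c :: "'a::order_top \<Rightarrow> 'b::order_bot \<Rightarrow> 'c::order_bot"
  assumes "adjoint_triple c s n"
  shows "s bot bot = top"
  using assms unfolding adjoint_triple_def by (metis bot.extremum top_le)

lemma adjoint_triple_sw_bot:
  fixes c :: "'a::order_bot \<Rightarrow> 'b::order_bot \<Rightarrow> 'c::order_bot"
  assumes "adjoint_triple c s n" and "\<not> has_zero_divisors c" and "y \<noteq> bot"
  shows "s bot y = bot"
proof -
  have "c (s bot y) y \<le> bot"
    using assms(1) unfolding adjoint_triple_def by blast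
  then show ?thesis
    using assms(2,3) bot_unique unfolding has_zero_divisors_def by blast
qed

lemma adjoint_triple_flip:
  "adjoint_triple c s n \<Longrightarrow> adjoint_triple (\<lambda>y x. c x y) n s"
  unfolding adjoint_triple_def by blast

lemma has_zero_divisors_flip:
  "has_zero_divisors (\<lambda>y x. c x y) \<longleftrightarrow> has_zero_divisors c"
  unfolding has_zero_divisors_def by blast

lemma down_N_eq_up_N_transpose:
  "down_N A B R nw sigma f b = up_N B A (\<lambda>b a. R a b) nw (\<lambda>b a. sigma a b) f b"
  unfolding down_N_def up_N_def ..

lemma separable_subcontext_transpose:
  "separable_subcontext A B R Y X \<Longrightarrow> separable_subcontext B A (\<lambda>b a. R a b) X Y"
  unfolding separable_subcontext_def by blast

lemma up_N_chi_separable_subcontext: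
  fixes c :: "'k \<Rightarrow> 'l1::complete_lattice \<Rightarrow> 'p::{order_bot,order_top} \<Rightarrow> 'l2::complete_lattice"
  assumes frame: "\<forall>k\<in>K. adjoint_triple (c k) (sw k) (nw k)"
    and no_zd: "\<forall>k\<in>K. \<not> has_zero_divisors (c k)"
    and sigma: "\<forall>b\<in>B. sigma a b \<in> K"
    and row: "\<exists>b\<in>B. R a b \<noteq> bot"
    and sep: "separable_subcontext A B R Y X"
    and a: "a \<in> A"
  shows "up_N A B R sw sigma (chi X) a = chi Y a"
proof -
  have adj: "adjoint_triple (c (sigma a b)) (sw (sigma a b)) (nw (sigma a b))"
    and no_zd_ab: "\<not> has_zero_divisors (c (sigma a b))" if "b \<in> B" for b
    using frame no_zd sigma that by blast+
  show ?thesis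
  proof (cases "a \<in> Y")
    case True
    have "sw (sigma a b) (chi X b) (R a b) = top" if b: "b \<in> B" for b
    proof (cases "b \<in> X")
      case True
      then show ?thesis
        using adjoint_triple_sw_top[OF adj[OF b]] by (simp add: chi_def)
    next
      case False
      then have "R a b = bot"
        using sep \<open>a \<in> Y\<close> b unfolding separable_subcontext_def by blast
      then show ?thesis
        using False adjoint_triple_sw_bot_bot[OF adj[OF b]] by (simp add: chi_def)
    qed
    then have "up_N A B R sw sigma (chi X) a = top"
      unfolding up_N_def Inf_top_conv by blast
    with True show ?thesis
      by (simp add: chi_def)
  next
    case False
    obtain b where b: "b \<in> B" "R a b \<noteq> bot"
      using row by blast
    then have "b \<notin> X"
      using sep False a unfolding separable_subcontext_def by blast
    then have "sw (sigma a b) (chi X b) (R a b) = bot"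
      using adjoint_triple_sw_bot[OF adj no_zd_ab] b by (simp add: chi_def)
    then have "up_N A B R sw sigma (chi X) a \<le> bot"
      unfolding up_N_def by (metis (mono_tags, lifting) Inf_lower b(1) mem_Collect_eq)
    then show ?thesis
      using False by (simp add: chi_def bot_unique)
  qed
qed

lemma separable_subcontext_in_F_N:
  fixes conjp :: "'j \<Rightarrow> 'p::{order_bot,order_top} \<Rightarrow> 'l2::complete_lattice \<Rightarrow> 'l1::complete_lattice"
    and conjo :: "'k \<Rightarrow> 'l1 \<Rightarrow> 'p \<Rightarrow> 'l2"
  assumes property_frame: "\<forall>j\<in>J. adjoint_triple (conjp j) (swp j) (nwp j)"
    and object_frame: "\<forall>k\<in>K. adjoint_triple (conjo k) (swo k) (nwo k)"
    and no_zd: "\<forall>j\<in>J. \<not> has_zero_divisors (conjp j)" "\<forall>k\<in>K. \<not> has_zero_divisors (conjo k)"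
    and sigma: "\<forall>a\<in>A. \<forall>b\<in>B. sigma_p a b \<in> J \<and> sigma_o a b \<in> K"
    and "normalized_context A B R"
    and sep: "separable_subcontext A B R Y X"
  shows "in_F_N A B R nwp sigma_p swo sigma_o (chi X) (chi Y)"
proof -
  have rows: "\<forall>a\<in>A. \<exists>b\<in>B. R a b \<noteq> bot" and cols: "\<forall>b\<in>B. \<exists>a\<in>A. R a b \<noteq> bot"
    using \<open>normalized_context A B R\<close> unfolding normalized_context_def by blast+
  have "up_N A B R swo sigma_o (chi X) a = chi Y a" if "a \<in> A" for a
    using up_N_chi_separable_subcontext[OF object_frame no_zd(2) _ _ sep that] sigma rows that by blast
  moreover have "down_N A B R nwp sigma_p (chi Y) b = chi X b" if "b \<in> B" for b
  proof -
    have flipped_frame: "\<forall>j\<in>J. adjoint_triple (\<lambda>y x. conjp j x y) (nwp j) (swp j)"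
      using property_frame adjoint_triple_flip by blast
    have flipped_no_zd: "\<forall>j\<in>J. \<not> has_zero_divisors (\<lambda>y x. conjp j x y)"
      using no_zd(1) has_zero_divisors_flip by blast
    show ?thesis
      unfolding down_N_eq_up_N_transpose
      using up_N_chi_separable_subcontext[where sigma = "\<lambda>b a. sigma_p a b",
          OF flipped_frame flipped_no_zd _ _
          separable_subcontext_transpose[OF sep] that] sigma cols that
      by blast
  qed
  ultimately show ?thesis
    unfolding in_F_N_def by blast
qed

theorem mainTheorem10:
  fixes cnj :: "'i \<Rightarrow> 'l1::complete_lattice \<Rightarrow> 'l2::complete_lattice \<Rightarrow> 'p::{order_bot,order_top}"
    and sw :: "'i \<Rightarrow> 'p \<Rightarrow> 'l2 \<Rightarrow> 'l1"
    and nw :: "'i \<Rightarrow> 'p \<Rightarrow> 'l1 \<Rightarrow> 'l2"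
    and conjp :: "'j \<Rightarrow> 'p \<Rightarrow> 'l2 \<Rightarrow> 'l1"
    and swp :: "'j \<Rightarrow> 'l1 \<Rightarrow> 'l2 \<Rightarrow> 'p"
    and nwp :: "'j \<Rightarrow> 'l1 \<Rightarrow> 'p \<Rightarrow> 'l2"
    and conjo :: "'k \<Rightarrow> 'l1 \<Rightarrow> 'p \<Rightarrow> 'l2"
    and swo :: "'k \<Rightarrow> 'l2 \<Rightarrow> 'p \<Rightarrow> 'l1"
    and nwo :: "'k \<Rightarrow> 'l2 \<Rightarrow> 'l1 \<Rightarrow> 'p"
    and I :: "'i set" and J :: "'j set" and K :: "'k set"
    and A :: "'a set" and B :: "'b set" and R :: "'a \<Rightarrow> 'b \<Rightarrow> 'p"
    and sigma :: "'a \<Rightarrow> 'b \<Rightarrow> 'i" and sigma_p :: "'a \<Rightarrow> 'b \<Rightarrow> 'j"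
    and sigma_o :: "'a \<Rightarrow> 'b \<Rightarrow> 'k"
    and Lam :: "'lam set" and Al :: "'lam \<Rightarrow> 'a set" and Bl :: "'lam \<Rightarrow> 'b set"
  assumes frames_finite: "finite I" "I \<noteq> {}" "finite J" "J \<noteq> {}" "finite K" "K \<noteq> {}"
    and multi_adjoint_frame: "\<forall>i\<in>I. adjoint_triple (cnj i) (sw i) (nw i)"
    and property_frame: "\<forall>j\<in>J. adjoint_triple (conjp j) (swp j) (nwp j)"
    and object_frame: "\<forall>k\<in>K. adjoint_triple (conjo k) (swo k) (nwo k)"
    and no_zd: "\<forall>i\<in>I. \<not> has_zero_divisors (cnj i)"
               "\<forall>j\<in>J. \<not> has_zero_divisors (conjp j)"
               "\<forall>k\<in>K. \<not> has_zero_divisors (conjo k)"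
    and ctxt_ok: "A \<noteq> {}" "B \<noteq> {}"
      "\<forall>a\<in>A. \<forall>b\<in>B. sigma a b \<in> I \<and> sigma_p a b \<in> J \<and> sigma_o a b \<in> K"
    and normalized: "normalized_context A B R"
    and decomposition:
      "Lam \<noteq> {}"
      "\<forall>l\<in>Lam. separable_subcontext A B R (Al l) (Bl l)"
      "\<forall>l\<in>Lam. \<forall>l'\<in>Lam. l \<noteq> l' \<longrightarrow> Al l \<inter> Al l' = {} \<and> Bl l \<inter> Bl l' = {}"
      "(\<Union>l\<in>Lam. Al l) = A" "(\<Union>l\<in>Lam. Bl l) = B"
      "\<forall>l\<in>Lam. \<forall>(a,b)\<in>((A - Al l) \<times> Bl l) \<union> (Al l \<times> (B - Bl l)).
         \<not> has_zero_divisors (cnj (sigma a b)) \<and>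
         \<not> has_zero_divisors (conjp (sigma_p a b)) \<and>
         \<not> has_zero_divisors (conjo (sigma_o a b))"
  shows "\<forall>l\<in>Lam. in_F_N A B R nwp sigma_p swo sigma_o (chi (Bl l)) (chi (Al l))"
proof
  fix l assume "l \<in> Lam"
  have sigma: "\<forall>a\<in>A. \<forall>b\<in>B. sigma_p a b \<in> J \<and> sigma_o a b \<in> K"
    using ctxt_ok(3) by blast
  have "separable_subcontext A B R (Al l) (Bl l)"
    using decomposition(2) \<open>l \<in> Lam\<close> by blast
  then show "in_F_N A B R nwp sigma_p swo sigma_o (chi (Bl l)) (chi (Al l))"
    by (rule separable_subcontext_in_F_N[OF property_frame object_frame no_zd(2,3) sigma normalized])
qed

end
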